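(* Let $\alpha\in(0,1)$, $\gamma,\beta>0$, $r_0>0$, $Y=B(0,r_0)\subset\mathbb R\oplus\mathbb R^{d-1}$, $\mathcal X(x)=\|x\|^\alpha Ax$ with $A=\gamma\,\mathrm{Id}_{\mathbb R}\oplus(-\beta\,\mathrm{Id}_{\mathbb R^{d-1}})$. Let $x$ be a trajectory of $\mathcal X$ entering $Y$ at time $0$ and leaving it at time $T_0$, $\theta(t)$ the angle between $x(t)$ and $\mathbb R\times\{0\}$, and let $s\in(0,\infty)$ with $\tan\theta(T_0)<s<\tan\theta(0)$, with $T_s$ the time at which $\tan\theta(T_s)=s$. (a) If $s^2>\gamma/\beta$, then $\chi(s):=\frac{\gamma}{\gamma+\beta}\left(1+\frac1{s^2}\right)<1$ and $T_s\le\chi(s)T_0$. (b) If $s^2<\gamma/\beta$, then $\chi'(s):=\frac{\gamma-\beta s^2}{\gamma+\beta}>0$ and $T_s\ge\chi'(s)T_0$. *)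

theory Defs
  imports "HOL-Analysis.Analysis"
begin

text \<open>Points of R^d = R (+) R^(d-1) are pairs (u, v) with u :: real, v :: real^'m
  (Euclidean norm on the product).\<close>

definition A_op :: "real \<Rightarrow> real \<Rightarrow> real \<times> (real^'m) \<Rightarrow> real \<times> (real^'m)" where
  "A_op \<gamma> \<beta> y = (\<gamma> * fst y, (- \<beta>) *\<^sub>R snd y)"

definition vfield :: "real \<Rightarrow> real \<Rightarrow> real \<Rightarrow> real \<times> (real^'m) \<Rightarrow> real \<times> (real^'m)" where
  "vfield \<alpha> \<gamma> \<beta> y = (norm y powr \<alpha>) *\<^sub>R A_op \<gamma> \<beta> y"

definition axis_angle :: "real \<times> (real^'m) \<Rightarrow> real" where
  "axis_angle y = arccos (\<bar>fst y\<bar> / norm y)"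

definition chi :: "real \<Rightarrow> real \<Rightarrow> real \<Rightarrow> real" where
  "chi \<gamma> \<beta> s = \<gamma> / (\<gamma> + \<beta>) * (1 + 1 / s^2)"

definition chi' :: "real \<Rightarrow> real \<Rightarrow> real \<Rightarrow> real" where
  "chi' \<gamma> \<beta> s = (\<gamma> - \<beta> * s^2) / (\<gamma> + \<beta>)"

end

theory Submission
  imports Defs
begin

text \<open>
  Let \<open>c(t) = cos\<^sup>2 \<theta>(t)\<close>. Along the flow \<open>c\<close> is nondecreasing, and the potential
  \<open>-\<parallel>x\<parallel>\<^sup>-\<^sup>\<alpha>/\<alpha>\<close> has derivative \<open>g = (\<gamma>+\<beta>) c - \<beta>\<close>: the factor \<open>\<parallel>x\<parallel>\<^sup>\<alpha>\<close> of the field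
  cancels exactly. A Gronwall estimate on \<open>\<parallel>x\<parallel>\<^sup>2\<close> keeps the trajectory away from \<open>0\<close>, so
  all this is defined on \<open>[0, T\<^sub>0]\<close>. As the trajectory enters and leaves \<open>Y\<close> on the same sphere,
  \<open>g\<close> has mean zero there; being monotone with values in \<open>[-\<beta>, \<gamma>]\<close> and equal to
  \<open>(\<gamma>+\<beta>)/(1+s\<^sup>2) - \<beta>\<close> at \<open>T\<^sub>s\<close>, comparing it on \<open>[0, T\<^sub>s]\<close> and \<open>[T\<^sub>s, T\<^sub>0]\<close> gives
  both time bounds.
\<close>

lemma mvt_within_Icc:
  fixes f f' :: "real \<Rightarrow> real"
  assumes der: "\<And>t. t \<in> {a..b} \<Longrightarrow> (f has_real_derivative f' t) (at t within {a..b})"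
    and "a \<le> p" "p \<le> q" "q \<le> b"
  shows "\<exists>\<xi>\<in>{p..q}. f q - f p = f' \<xi> * (q - p)"
proof -
  have "(f has_derivative (*) (f' t)) (at t within {p..q})" if "t \<in> {p..q}" for t
    using der[of t] that assms(2-4)
    by (auto simp: has_field_derivative_def intro: has_derivative_subset)
  from mvt_very_simple[OF \<open>p \<le> q\<close> this] show ?thesis by auto
qed

lemma mono_on_Icc_of_deriv_nonneg:
  fixes f f' :: "real \<Rightarrow> real"
  assumes der: "\<And>t. t \<in> {a..b} \<Longrightarrow> (f has_real_derivative f' t) (at t within {a..b})"
    and nonneg: "\<And>t. t \<in> {a..b} \<Longrightarrow> 0 \<le> f' t"
  shows "mono_on {a..b} f"
proof (rule mono_onI)
  fix p q assume "p \<in> {a..b}" "q \<in> {a..b}" "p \<le> q"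
  then obtain \<xi> where "\<xi> \<in> {p..q}" "f q - f p = f' \<xi> * (q - p)"
    using mvt_within_Icc[OF der, of p q] by auto
  moreover have "0 \<le> f' \<xi> * (q - p)"
    using nonneg \<open>\<xi> \<in> {p..q}\<close> \<open>p \<in> {a..b}\<close> \<open>q \<in> {a..b}\<close> \<open>p \<le> q\<close> by auto
  ultimately show "f p \<le> f q" by simp
qed

lemma Gronwall_lower_bound:
  fixes f f' :: "real \<Rightarrow> real"
  assumes der: "\<And>t. t \<in> {a..b} \<Longrightarrow> (f has_real_derivative f' t) (at t within {a..b})"
    and bound: "\<And>t. t \<in> {a..b} \<Longrightarrow> - M * f t \<le> f' t"
    and "t \<in> {a..b}"
  shows "f a * exp (- M * (t - a)) \<le> f t"
proof -
  define h where "h t = f t * exp (M * (t - a))" for t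
  have "(h has_real_derivative (f' t + M * f t) * exp (M * (t - a))) (at t within {a..b})"
    if "t \<in> {a..b}" for t
    unfolding h_def by (rule derivative_eq_intros der[OF that] refl)+ (simp add: algebra_simps)
  moreover have "0 \<le> (f' t + M * f t) * exp (M * (t - a))" if "t \<in> {a..b}" for t
    using bound[OF that] by simp
  ultimately have "mono_on {a..b} h"
    by (rule mono_on_Icc_of_deriv_nonneg)
  then have "h a \<le> h t"
    using \<open>t \<in> {a..b}\<close> by (auto intro: mono_onD)
  then have "f a * exp (- M * (t - a)) \<le> f t * exp (M * (t - a)) * exp (- M * (t - a))"
    by (simp add: h_def)
  also have "\<dots> = f t" by (simp flip: exp_add)
  finally show ?thesis .
qed

text \<open>\<open>f a = f b\<close> says that \<open>g\<close> has mean zero; on each side of \<open>\<tau>\<close> it is bounded by \<open>g \<tau>\<close>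
  through monotonicity and by \<open>lo\<close> or \<open>hi\<close> otherwise.\<close>

lemma mono_derivative_balance:
  fixes f g :: "real \<Rightarrow> real"
  assumes der: "\<And>t. t \<in> {a..b} \<Longrightarrow> (f has_real_derivative g t) (at t within {a..b})"
    and "f a = f b" and mono: "mono_on {a..b} g"
    and bounds: "\<And>t. t \<in> {a..b} \<Longrightarrow> lo \<le> g t \<and> g t \<le> hi"
    and \<tau>: "\<tau> \<in> {a..b}"
  shows "g \<tau> * (b - \<tau>) + lo * (\<tau> - a) \<le> 0"
    and "0 \<le> g \<tau> * (\<tau> - a) + hi * (b - \<tau>)"
proof -
  obtain \<xi> where \<xi>: "\<xi> \<in> {a..\<tau>}" "f \<tau> - f a = g \<xi> * (\<tau> - a)"
    using mvt_within_Icc[OF der, of a \<tau>] \<tau> by auto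
  obtain \<eta> where \<eta>: "\<eta> \<in> {\<tau>..b}" "f b - f \<tau> = g \<eta> * (b - \<tau>)"
    using mvt_within_Icc[OF der, of \<tau> b] \<tau> by auto
  have sum: "g \<xi> * (\<tau> - a) + g \<eta> * (b - \<tau>) = 0"
    using \<xi>(2) \<eta>(2) \<open>f a = f b\<close> by linarith
  have \<xi>\<eta>: "\<xi> \<in> {a..b}" "\<eta> \<in> {a..b}" "\<xi> \<le> \<tau>" "\<tau> \<le> \<eta>"
    using \<xi>(1) \<eta>(1) \<tau> by auto
  have "lo \<le> g \<xi>" "g \<eta> \<le> hi"
    using bounds \<xi>\<eta> by blast+
  moreover have "g \<xi> \<le> g \<tau>" "g \<tau> \<le> g \<eta>"
    using mono_onD[OF mono] \<xi>\<eta> \<tau> by blast+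
  moreover have "0 \<le> \<tau> - a" "0 \<le> b - \<tau>" using \<tau> by auto
  ultimately have "lo * (\<tau> - a) \<le> g \<xi> * (\<tau> - a)" "g \<tau> * (b - \<tau>) \<le> g \<eta> * (b - \<tau>)"
    and "g \<xi> * (\<tau> - a) \<le> g \<tau> * (\<tau> - a)" "g \<eta> * (b - \<tau>) \<le> hi * (b - \<tau>)"
    by (simp_all add: mult_right_mono)
  with sum show "g \<tau> * (b - \<tau>) + lo * (\<tau> - a) \<le> 0"
    and "0 \<le> g \<tau> * (\<tau> - a) + hi * (b - \<tau>)" by linarith+
qed

definition axis_cos_sq :: "real \<times> (real^'m) \<Rightarrow> real" where
  "axis_cos_sq y = (fst y)^2 / (norm y)^2"

lemma norm_sq_fst_snd: "(norm y)^2 = (fst y)^2 + (norm (snd y))^2"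
  for y :: "real \<times> 'b::real_normed_vector"
  by (simp add: norm_prod_def)

lemma axis_cos_sq_bounds: "0 \<le> axis_cos_sq y" "axis_cos_sq y \<le> 1"
proof -
  have "(fst y)^2 \<le> (norm y)^2" by (simp add: norm_sq_fst_snd)
  then show "0 \<le> axis_cos_sq y" "axis_cos_sq y \<le> 1"
    by (simp_all add: axis_cos_sq_def divide_le_eq_1)
qed

lemma axis_cos_sq_of_tan_axis_angle:
  assumes "tan (axis_angle y) = s" "0 < s"
  shows "axis_cos_sq y = 1 / (1 + s^2)"
proof -
  define c where "c = \<bar>fst y\<bar> / norm y"
  have "\<bar>fst y\<bar> \<le> norm y"
    using norm_fst_le[of "fst y" "snd y"] by simp
  then have "0 \<le> c" "c \<le> 1"
    by (simp_all add: c_def divide_le_eq_1)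
  moreover have "axis_angle y = arccos c"
    by (simp add: axis_angle_def c_def)
  ultimately have "s = sqrt (1 - c^2) / c"
    using assms(1) by (simp add: tan_def sin_arccos cos_arccos)
  with \<open>0 < s\<close> \<open>0 \<le> c\<close> have "0 < c" "(s * c)^2 = 1 - c^2"
    by (auto simp: less_le \<open>c \<le> 1\<close> power_le_one)
  then have "c^2 * (1 + s^2) = 1" by (simp add: algebra_simps power_mult_distrib)
  moreover have "axis_cos_sq y = c^2"
    by (simp add: c_def axis_cos_sq_def power_divide)
  moreover have "0 < 1 + s^2" by (simp add: add_pos_nonneg)
  ultimately show ?thesis by (simp add: eq_divide_eq)
qed

lemma inner_vfield:
  "inner y (vfield \<alpha> \<gamma> \<beta> y) = norm y powr \<alpha> * (\<gamma> * (fst y)^2 - \<beta> * (norm (snd y))^2)"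
  by (simp add: vfield_def A_op_def inner_prod_def power2_norm_eq_inner algebra_simps)
    (simp add: power2_eq_square)

lemma trajectory_fst_sq_deriv:
  assumes "(x has_vector_derivative vfield \<alpha> \<gamma> \<beta> (x t)) (at t within S)"
  shows "((\<lambda>t. (fst (x t))^2) has_real_derivative 2 * \<gamma> * norm (x t) powr \<alpha> * (fst (x t))^2)
    (at t within S)"
proof -
  have "((\<lambda>t. fst (x t)) has_real_derivative \<gamma> * norm (x t) powr \<alpha> * fst (x t)) (at t within S)"
    using bounded_linear.has_vector_derivative[OF bounded_linear_fst assms]
    by (simp add: has_real_derivative_iff_has_vector_derivative vfield_def A_op_def mult_ac)
  from DERIV_power[OF this, of 2] show ?thesis
    by (simp add: power2_eq_square mult_ac)
qed

lemma trajectory_norm_sq_deriv: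
  assumes "(x has_vector_derivative vfield \<alpha> \<gamma> \<beta> (x t)) (at t within S)"
  shows "((\<lambda>t. (norm (x t))^2) has_real_derivative
      2 * norm (x t) powr \<alpha> * (\<gamma> * (fst (x t))^2 - \<beta> * (norm (snd (x t)))^2)) (at t within S)"
  using bounded_bilinear.has_vector_derivative[OF bounded_bilinear_inner assms assms]
  by (simp add: power2_norm_eq_inner has_real_derivative_iff_has_vector_derivative
      inner_commute[of "vfield \<alpha> \<gamma> \<beta> (x t)"] inner_vfield mult.assoc)

lemma trajectory_axis_cos_sq_deriv:
  assumes "(x has_vector_derivative vfield \<alpha> \<gamma> \<beta> (x t)) (at t within S)" and "x t \<noteq> 0"
  shows "((\<lambda>t. axis_cos_sq (x t)) has_real_derivative
      2 * (\<gamma> + \<beta>) * norm (x t) powr \<alpha> * (fst (x t))^2 * (norm (snd (x t)))^2 / (norm (x t))^4)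
    (at t within S)"
proof -
  let ?u = "fst (x t)" and ?w = "norm (snd (x t))" and ?N = "(norm (x t))^2" and ?\<rho> = "norm (x t) powr \<alpha>"
  have "?N \<noteq> 0" using assms(2) by simp
  from DERIV_divide[OF trajectory_fst_sq_deriv[OF assms(1)] trajectory_norm_sq_deriv[OF assms(1)] this]
  have "((\<lambda>t. axis_cos_sq (x t)) has_real_derivative
      (2 * \<gamma> * ?\<rho> * ?u^2 * ?N - ?u^2 * (2 * ?\<rho> * (\<gamma> * ?u^2 - \<beta> * ?w^2))) / (?N * ?N))
    (at t within S)"
    unfolding axis_cos_sq_def .
  moreover have "2 * \<gamma> * ?\<rho> * ?u^2 * ?N - ?u^2 * (2 * ?\<rho> * (\<gamma> * ?u^2 - \<beta> * ?w^2))
      = 2 * (\<gamma> + \<beta>) * ?\<rho> * ?u^2 * ?w^2"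
    by (simp add: norm_sq_fst_snd[of "x t"] algebra_simps)
  moreover have "?N * ?N = (norm (x t))^4" by simp
  ultimately show ?thesis by simp
qed

lemma trajectory_potential_deriv:
  assumes "(x has_vector_derivative vfield \<alpha> \<gamma> \<beta> (x t)) (at t within S)"
    and "x t \<noteq> 0" and "\<alpha> \<noteq> 0"
  shows "((\<lambda>t. - (norm (x t) powr (- \<alpha>)) / \<alpha>) has_real_derivative
      (\<gamma> + \<beta>) * axis_cos_sq (x t) - \<beta>) (at t within S)"
proof -
  let ?N = "(norm (x t))^2" and ?Q = "\<gamma> * (fst (x t))^2 - \<beta> * (norm (snd (x t)))^2"
  have "0 < ?N" using assms(2) by simp
  have norm_powr: "norm (x t) powr p = ((norm (x t))^2) powr (p / 2)" for t p
    by (simp add: powr_powr flip: powr_numeral)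
  have "- \<alpha> / 2 * ?N powr (- \<alpha> / 2 - 1) * (2 * norm (x t) powr \<alpha> * ?Q)
      = - \<alpha> * (?N powr (- \<alpha> / 2 - 1) * ?N powr (\<alpha> / 2)) * ?Q"
    unfolding norm_powr[of t \<alpha>] by simp
  also have "\<dots> = - \<alpha> * ?Q / ?N"
    using \<open>0 < ?N\<close> by (simp add: powr_add[symmetric] powr_neg_one)
  finally have deriv: "((\<lambda>t. norm (x t) powr (- \<alpha>)) has_real_derivative - \<alpha> * ?Q / ?N) (at t within S)"
    using DERIV_chain2[OF has_real_derivative_powr[OF \<open>0 < ?N\<close>] trajectory_norm_sq_deriv[OF assms(1)],
        of "- \<alpha> / 2"]
    by (simp add: norm_powr[of _ "- \<alpha>"])
  have "?Q = (\<gamma> + \<beta>) * (fst (x t))^2 - \<beta> * ?N"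
    by (simp add: norm_sq_fst_snd[of "x t"] algebra_simps)
  then have deriv_eq: "- (- \<alpha> * ?Q / ?N) / \<alpha> = (\<gamma> + \<beta>) * axis_cos_sq (x t) - \<beta>"
    using \<open>\<alpha> \<noteq> 0\<close> \<open>0 < ?N\<close> by (simp add: axis_cos_sq_def diff_divide_distrib)
  from DERIV_cdivide[OF DERIV_minus[OF deriv], of \<alpha>] show ?thesis
    unfolding deriv_eq .
qed

lemma trajectory_nonzero:
  assumes "0 \<le> \<alpha>" "0 \<le> \<gamma>" "0 \<le> \<beta>"
    and traj: "\<And>t. t \<in> {a..b} \<Longrightarrow> (x has_vector_derivative vfield \<alpha> \<gamma> \<beta> (x t)) (at t within {a..b})"
    and "x a \<noteq> 0" and bounded: "\<And>t. t \<in> {a..b} \<Longrightarrow> norm (x t) \<le> r"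
    and "t \<in> {a..b}"
  shows "x t \<noteq> 0"
proof -
  define M where "M = 2 * \<beta> * r powr \<alpha>"
  have "- M * (norm (x t))^2 \<le> 2 * norm (x t) powr \<alpha> * (\<gamma> * (fst (x t))^2 - \<beta> * (norm (snd (x t)))^2)"
    if "t \<in> {a..b}" for t
  proof -
    have "norm (x t) powr \<alpha> \<le> r powr \<alpha>"
      using bounded[OF that] \<open>0 \<le> \<alpha>\<close> by (simp add: powr_mono2)
    moreover have "(norm (snd (x t)))^2 \<le> (norm (x t))^2"
      by (simp add: norm_sq_fst_snd[of "x t"])
    ultimately have "norm (x t) powr \<alpha> * (norm (snd (x t)))^2 \<le> r powr \<alpha> * (norm (x t))^2"
      by (simp add: mult_mono)
    then have "\<beta> * (norm (x t) powr \<alpha> * (norm (snd (x t)))^2) \<le> \<beta> * (r powr \<alpha> * (norm (x t))^2)"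
      using \<open>0 \<le> \<beta>\<close> by (rule mult_left_mono)
    moreover have "0 \<le> \<gamma> * (norm (x t) powr \<alpha> * (fst (x t))^2)"
      using \<open>0 \<le> \<gamma>\<close> by simp
    ultimately show ?thesis
      unfolding M_def by (simp add: algebra_simps)
  qed
  with Gronwall_lower_bound[OF trajectory_norm_sq_deriv[OF traj]] \<open>t \<in> {a..b}\<close>
  have "(norm (x a))^2 * exp (- M * (t - a)) \<le> (norm (x t))^2"
    by blast
  moreover have "0 < (norm (x a))^2 * exp (- M * (t - a))"
    using \<open>x a \<noteq> 0\<close> by simp
  ultimately show ?thesis by auto
qed

lemma trajectory_axis_cos_sq_mono:
  assumes "0 \<le> \<gamma> + \<beta>"
    and traj: "\<And>t. t \<in> {a..b} \<Longrightarrow> (x has_vector_derivative vfield \<alpha> \<gamma> \<beta> (x t)) (at t within {a..b})"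
    and nonzero: "\<And>t. t \<in> {a..b} \<Longrightarrow> x t \<noteq> 0"
  shows "mono_on {a..b} (\<lambda>t. axis_cos_sq (x t))"
  by (rule mono_on_Icc_of_deriv_nonneg[OF trajectory_axis_cos_sq_deriv[OF traj nonzero]])
    (use assms(1) in \<open>auto intro!: divide_nonneg_nonneg mult_nonneg_nonneg\<close>)

lemma trajectory_time_balance:
  assumes "0 < \<alpha>" "0 \<le> \<gamma>" "0 \<le> \<beta>"
    and traj: "\<And>t. t \<in> {a..b} \<Longrightarrow> (x has_vector_derivative vfield \<alpha> \<gamma> \<beta> (x t)) (at t within {a..b})"
    and "x a \<noteq> 0" and "norm (x a) = norm (x b)"
    and bounded: "\<And>t. t \<in> {a..b} \<Longrightarrow> norm (x t) \<le> r"
    and \<tau>: "\<tau> \<in> {a..b}"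
  shows "((\<gamma> + \<beta>) * axis_cos_sq (x \<tau>) - \<beta>) * (b - \<tau>) - \<beta> * (\<tau> - a) \<le> 0"
    and "0 \<le> ((\<gamma> + \<beta>) * axis_cos_sq (x \<tau>) - \<beta>) * (\<tau> - a) + \<gamma> * (b - \<tau>)"
proof -
  define g where "g t = (\<gamma> + \<beta>) * axis_cos_sq (x t) - \<beta>" for t
  have nonzero: "x t \<noteq> 0" if "t \<in> {a..b}" for t
    using trajectory_nonzero[OF _ _ _ traj \<open>x a \<noteq> 0\<close> bounded that] assms(1-3) by simp
  have potential: "((\<lambda>t. - (norm (x t) powr (- \<alpha>)) / \<alpha>) has_real_derivative g t) (at t within {a..b})"
    if "t \<in> {a..b}" for t
    unfolding g_def using trajectory_potential_deriv[OF traj nonzero] that \<open>0 < \<alpha>\<close> by simp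
  have ends: "- (norm (x a) powr (- \<alpha>)) / \<alpha> = - (norm (x b) powr (- \<alpha>)) / \<alpha>"
    using \<open>norm (x a) = norm (x b)\<close> by simp
  have g_mono: "mono_on {a..b} g"
    using trajectory_axis_cos_sq_mono[OF _ traj nonzero] assms(2,3)
    by (auto simp: g_def mono_on_def intro: mult_left_mono)
  have g_bounds: "- \<beta> \<le> g t \<and> g t \<le> \<gamma>" for t
  proof -
    have "0 \<le> (\<gamma> + \<beta>) * axis_cos_sq (x t)" "(\<gamma> + \<beta>) * axis_cos_sq (x t) \<le> \<gamma> + \<beta>"
      using axis_cos_sq_bounds[of "x t"] assms(2,3) by (simp_all add: mult_left_le)
    then show ?thesis by (simp add: g_def)
  qed
  from mono_derivative_balance[OF potential ends g_mono g_bounds \<tau>]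
  show "((\<gamma> + \<beta>) * axis_cos_sq (x \<tau>) - \<beta>) * (b - \<tau>) - \<beta> * (\<tau> - a) \<le> 0"
    and "0 \<le> ((\<gamma> + \<beta>) * axis_cos_sq (x \<tau>) - \<beta>) * (\<tau> - a) + \<gamma> * (b - \<tau>)"
    unfolding g_def by simp_all
qed

lemma chi_eq:
  assumes "0 < \<gamma> + \<beta>" "s \<noteq> 0"
  shows "chi \<gamma> \<beta> s = \<gamma> * (1 + s^2) / ((\<gamma> + \<beta>) * s^2)"
  using assms by (simp add: chi_def field_simps)

lemma chi_lt_one:
  assumes "0 < \<gamma>" "0 < \<beta>" "\<gamma> / \<beta> < s^2"
  shows "chi \<gamma> \<beta> s < 1"
proof -
  have "\<gamma> < \<beta> * s^2" "0 < s^2"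
    using assms by (auto simp: divide_less_eq mult.commute intro: le_less_trans[of 0 "\<gamma>/\<beta>"])
  then have "\<gamma> * (1 + s^2) < (\<gamma> + \<beta>) * s^2" by (simp add: algebra_simps)
  with \<open>0 < s^2\<close> assms show ?thesis
    by (simp add: chi_eq divide_less_eq_1_pos)
qed

lemma chi'_pos:
  assumes "0 < \<gamma> + \<beta>" "0 < \<beta>" "s^2 < \<gamma> / \<beta>"
  shows "0 < chi' \<gamma> \<beta> s"
  using assms by (simp add: chi'_def less_divide_eq mult.commute)

lemma le_chi_mul:
  assumes "0 < \<gamma> + \<beta>" "s \<noteq> 0"
    and "0 \<le> ((\<gamma> + \<beta>) / (1 + s^2) - \<beta>) * \<tau> + \<gamma> * (T - \<tau>)"
  shows "\<tau> \<le> chi \<gamma> \<beta> s * T"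
proof -
  have "0 < 1 + s^2" "0 < s^2" using \<open>s \<noteq> 0\<close> by (simp_all add: add_pos_nonneg)
  with assms(3) have "(\<gamma> + \<beta>) * s^2 * \<tau> \<le> \<gamma> * (1 + s^2) * T"
    by (simp add: field_simps)
  with \<open>0 < s^2\<close> \<open>0 < \<gamma> + \<beta>\<close> \<open>s \<noteq> 0\<close> show ?thesis
    by (simp add: chi_eq pos_le_divide_eq mult_ac)
qed

lemma chi'_mul_le:
  assumes "0 < \<gamma> + \<beta>"
    and "((\<gamma> + \<beta>) / (1 + s^2) - \<beta>) * (T - \<tau>) - \<beta> * \<tau> \<le> 0"
  shows "chi' \<gamma> \<beta> s * T \<le> \<tau>"
proof -
  have "0 < 1 + s^2" by (simp add: add_pos_nonneg)
  with assms(2) have "(\<gamma> - \<beta> * s^2) * T \<le> (\<gamma> + \<beta>) * \<tau>"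
    by (simp add: field_simps)
  with \<open>0 < \<gamma> + \<beta>\<close> show ?thesis
    by (simp add: chi'_def field_simps)
qed

theorem lemma7p5:
  fixes x :: "real \<Rightarrow> real \<times> (real^'m)"
    and \<alpha> \<gamma> \<beta> r0 T0 s Ts :: real
  assumes "0 < \<alpha>" "\<alpha> < 1" "0 < \<gamma>" "0 < \<beta>" "0 < r0"
    and "0 < T0"
    and traj: "\<forall>t\<in>{0..T0}. (x has_vector_derivative vfield \<alpha> \<gamma> \<beta> (x t)) (at t within {0..T0})"
    and enter: "norm (x 0) = r0"
    and leave: "norm (x T0) = r0"
    and inside: "\<forall>t\<in>{0<..<T0}. x t \<in> ball 0 r0"
    and "0 < s"
    and "tan (axis_angle (x T0)) < s" "s < tan (axis_angle (x 0))"
    and "Ts \<in> {0..T0}" "tan (axis_angle (x Ts)) = s"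
  shows "(s^2 > \<gamma> / \<beta> \<longrightarrow> chi \<gamma> \<beta> s < 1 \<and> Ts \<le> chi \<gamma> \<beta> s * T0)
       \<and> (s^2 < \<gamma> / \<beta> \<longrightarrow> chi' \<gamma> \<beta> s > 0 \<and> Ts \<ge> chi' \<gamma> \<beta> s * T0)"
proof -
  have bounded: "norm (x t) \<le> r0" if "t \<in> {0..T0}" for t
    using that enter leave inside[rule_format, of t] by (cases "t = 0 \<or> t = T0") auto
  have "x 0 \<noteq> 0" "norm (x 0) = norm (x T0)"
    using enter leave \<open>0 < r0\<close> by auto
  from trajectory_time_balance[OF \<open>0 < \<alpha>\<close> less_imp_le[OF \<open>0 < \<gamma>\<close>] less_imp_le[OF \<open>0 < \<beta>\<close>]
      traj[rule_format] this bounded \<open>Ts \<in> {0..T0}\<close>]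
  have "((\<gamma> + \<beta>) * axis_cos_sq (x Ts) - \<beta>) * (T0 - Ts) - \<beta> * Ts \<le> 0"
    and "0 \<le> ((\<gamma> + \<beta>) * axis_cos_sq (x Ts) - \<beta>) * Ts + \<gamma> * (T0 - Ts)"
    by simp_all
  moreover have "axis_cos_sq (x Ts) = 1 / (1 + s^2)"
    using axis_cos_sq_of_tan_axis_angle \<open>tan (axis_angle (x Ts)) = s\<close> \<open>0 < s\<close> by blast
  ultimately show ?thesis
    using \<open>0 < \<gamma>\<close> \<open>0 < \<beta>\<close> \<open>0 < s\<close>
    by (auto intro: chi_lt_one chi'_pos le_chi_mul chi'_mul_le)
qed

end
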